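(* Up to multiplication by a positive integer, every basic weight of a basic system of type $C$ is one of the following (coordinates $\lambda_k=\langle\lambda,e_k\rangle$): (1) $(C_2,1,1)$: $(0,1)$; (2) $(C_2,1,2)$: $(1,1)$, $(-1,1)$; (3) $(C_2,2,1)$: $(1,0)$, $(0,-1)$; (4) $(C_2,2,2)$: $(1,-1)$; (5) $(C_3,2,2)$: $(1,0,1)$, $(0,-1,1)$; (6) $(C_3,2,3)$: $(1,-1,1)$; (7) $(C_3,3,2)$: $(1,0,-1)$; (8) $(C_4,3,3)$: $(1,0,-1,1)$.
   Context: $C_n$ is realized in $\mathbb R^n$ with orthonormal basis $e_1,\dots,e_n$ and standard inner product, simple roots $\alpha_k=e_k-e_{k+1}$ ($k<n$), $\alpha_n=2e_n$. Let $W$ be the Weyl group, $\alpha^\vee=2\alpha/\langle\alpha,\alpha\rangle$. A weight is integral if $\langle\lambda,\alpha^\vee\rangle\in\mathbb Z$ for all roots $\alpha$; $\overline\lambda$ is the dominant weight in $W\lambda$. For $I=\Delta\setminus\{\alpha_i\}$, $J=\Delta\setminus\{\alpha_j\}$, a basic weight of $(\Phi,i,j)$ is an integral $\lambda$ with $\langle\lambda,\alpha^\vee\rangle\in\mathbb Z_{>0}$ for all $\alpha\in I$ and $\{\alpha\in\Delta:\langle\overline\lambda,\alpha\rangle=0\}=J$; $(\Phi,i,j)$ is a basic system if it has a basic weight. *)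

theory Defs
  imports Complex_Main
begin

text \<open>Weights of C_n are real vectors of R^n, represented as lists of length n;
  coordinate k (1-based) of x is x ! (k - 1).\<close>

definition vadd :: "real list \<Rightarrow> real list \<Rightarrow> real list" where
  "vadd x y = map2 (+) x y"

definition vscale :: "real \<Rightarrow> real list \<Rightarrow> real list" where
  "vscale c x = map ((*) c) x"

definition inner_l :: "real list \<Rightarrow> real list \<Rightarrow> real" where
  "inner_l x y = sum_list (map2 (*) x y)"

definition unit_e :: "nat \<Rightarrow> nat \<Rightarrow> real list" where
  "unit_e n k = map (\<lambda>t. if t = k then 1 else 0) [1..<n+1]"

definition roots_C :: "nat \<Rightarrow> real list set" where
  "roots_C n =
     {vadd (vscale s (unit_e n k)) (vscale t (unit_e n l)) | k l s t.
        1 \<le> k \<and> k < l \<and> l \<le> n \<and> s \<in> {1, -1} \<and> t \<in> {1, -1}}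
   \<union> {vscale (2 * s) (unit_e n k) | k s. 1 \<le> k \<and> k \<le> n \<and> s \<in> {1, -1}}"

definition simple_root :: "nat \<Rightarrow> nat \<Rightarrow> real list" where
  "simple_root n k = (if k < n then vadd (unit_e n k) (vscale (-1) (unit_e n (k+1)))
                      else vscale 2 (unit_e n n))"

definition coroot :: "real list \<Rightarrow> real list" where
  "coroot a = vscale (2 / inner_l a a) a"

definition integral_weight :: "nat \<Rightarrow> real list \<Rightarrow> bool" where
  "integral_weight n x \<longleftrightarrow> (\<forall>a\<in>roots_C n. inner_l x (coroot a) \<in> \<int>)"

definition refl :: "real list \<Rightarrow> real list \<Rightarrow> real list" where
  "refl a x = vadd x (vscale (- inner_l x (coroot a)) a)"

text \<open>The Weyl orbit W x: W is generated by the simple reflections (W is finite,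
  so the generated monoid is the generated group).\<close>
inductive_set weyl_orbit :: "nat \<Rightarrow> real list \<Rightarrow> real list set" for n x where
  base: "x \<in> weyl_orbit n x"
| step: "y \<in> weyl_orbit n x \<Longrightarrow> 1 \<le> k \<Longrightarrow> k \<le> n \<Longrightarrow>
           refl (simple_root n k) y \<in> weyl_orbit n x"

definition dominant :: "nat \<Rightarrow> real list \<Rightarrow> bool" where
  "dominant n y \<longleftrightarrow> (\<forall>k\<in>{1..n}. inner_l y (simple_root n k) \<ge> 0)"

definition dom_rep :: "nat \<Rightarrow> real list \<Rightarrow> real list" where
  "dom_rep n x = (THE y. y \<in> weyl_orbit n x \<and> dominant n y)"

text \<open>Basic weight of (C_n, i, j): I = Delta - {alpha_i}, J = Delta - {alpha_j}
  (simple roots identified with their indices 1..n).\<close>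
definition basic_weight :: "nat \<Rightarrow> nat \<Rightarrow> nat \<Rightarrow> real list \<Rightarrow> bool" where
  "basic_weight n i j x \<longleftrightarrow>
     length x = n \<and> integral_weight n x \<and>
     (\<forall>k\<in>{1..n} - {i}. \<exists>m::int. m > 0 \<and> inner_l x (coroot (simple_root n k)) = of_int m) \<and>
     {k\<in>{1..n}. inner_l (dom_rep n x) (simple_root n k) = 0} = {1..n} - {j}"

definition basic_system :: "nat \<Rightarrow> nat \<Rightarrow> nat \<Rightarrow> bool" where
  "basic_system n i j \<longleftrightarrow> (\<exists>x. basic_weight n i j x)"

definition listed_weights :: "nat \<Rightarrow> nat \<Rightarrow> nat \<Rightarrow> real list set" where
  "listed_weights n i j =
    (if (n, i, j) = (2, 1, 1) then {[0, 1]}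
     else if (n, i, j) = (2, 1, 2) then {[1, 1], [-1, 1]}
     else if (n, i, j) = (2, 2, 1) then {[1, 0], [0, -1]}
     else if (n, i, j) = (2, 2, 2) then {[1, -1]}
     else if (n, i, j) = (3, 2, 2) then {[1, 0, 1], [0, -1, 1]}
     else if (n, i, j) = (3, 2, 3) then {[1, -1, 1]}
     else if (n, i, j) = (3, 3, 2) then {[1, 0, -1]}
     else if (n, i, j) = (4, 3, 3) then {[1, 0, -1, 1]}
     else {})"

end

theory Submission
  imports Defs "HOL-Library.Multiset"
begin

(* The simple reflections of C_n swap two adjacent coordinates or negate the last one, so
   the Weyl orbit of x preserves the multiset of the |x_k|, and its dominant element is the
   decreasing rearrangement of |x|. For a basic weight of (C_n, i, j) this rearrangement
   vanishes on exactly the simple roots other than alpha_j, so it is (c, ..., c, 0, ..., 0)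
   with j entries c > 0; c is an integer because the coroot of 2 e_k is e_k. Hence x has
   entries in {-c, 0, c}, exactly j of them nonzero, and the condition on I says that x
   strictly decreases except between positions i and i + 1 and that x_n > 0 unless i = n.
   A strictly decreasing run in {-c, 0, c} has at most three terms, which forces
   n - 1 <= i <= 3, and the remaining cases are the table. *)

lemma length_unit_e [simp]: "length (unit_e n k) = n"
  by (simp add: unit_e_def)

lemma nth_unit_e [simp]: "t < n \<Longrightarrow> unit_e n k ! t = (if t + 1 = k then 1 else 0)"
  by (simp add: unit_e_def del: upt_Suc)

lemma length_vadd [simp]: "length (vadd a b) = min (length a) (length b)"
  by (simp add: vadd_def)

lemma nth_vadd [simp]: "t < length a \<Longrightarrow> t < length b \<Longrightarrow> vadd a b ! t = a ! t + b ! t"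
  by (simp add: vadd_def)

lemma length_vscale [simp]: "length (vscale c a) = length a"
  by (simp add: vscale_def)

lemma nth_vscale [simp]: "t < length a \<Longrightarrow> vscale c a ! t = c * a ! t"
  by (simp add: vscale_def)

lemma length_simple_root [simp]: "length (simple_root n k) = n"
  by (simp add: simple_root_def)

lemma inner_l_conv_sum:
  "length a = length b \<Longrightarrow> inner_l a b = (\<Sum>t<length a. a ! t * b ! t)"
  by (simp add: inner_l_def sum_list_sum_nth atLeast0LessThan)

lemma inner_l_vscale_right: "inner_l y (vscale c a) = c * inner_l y a"
  unfolding inner_l_def vscale_def
  by (induct y a rule: list_induct2') (auto simp: algebra_simps)

lemma inner_l_vadd_right:
  "length a = length b \<Longrightarrow> inner_l y (vadd a b) = inner_l y a + inner_l y b"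
  unfolding inner_l_def vadd_def
proof (induct a b arbitrary: y rule: list_induct2)
  case (Cons u a v b)
  then show ?case
    by (cases y) (auto simp: algebra_simps)
qed simp

lemma inner_l_unit_e:
  assumes "length y = n" "k \<in> {1..n}"
  shows "inner_l y (unit_e n k) = y ! (k - 1)"
proof -
  have "inner_l y (unit_e n k) = (\<Sum>t<n. y ! t * unit_e n k ! t)"
    using assms by (simp add: inner_l_conv_sum)
  also have "\<dots> = (\<Sum>t<n. if t = k - 1 then y ! t else 0)"
    using assms by (intro sum.cong) auto
  finally show ?thesis
    using assms by auto
qed

lemma inner_simple_root:
  assumes "length y = n" "k \<in> {1..n}"
  shows "inner_l y (simple_root n k) = (if k < n then y ! (k - 1) - y ! k else 2 * y ! (n - 1))"
  using assms
  by (simp add: simple_root_def inner_l_vadd_right inner_l_vscale_right inner_l_unit_e)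

lemma inner_simple_root_self:
  assumes "k \<in> {1..n}"
  shows "inner_l (simple_root n k) (simple_root n k) = (if k < n then 2 else 4)"
  using assms inner_simple_root[of "simple_root n k" n k] by (auto simp: simple_root_def)

lemma inner_coroot: "inner_l y (coroot a) = 2 / inner_l a a * inner_l y a"
  by (simp add: coroot_def inner_l_vscale_right)

lemma inner_coroot_simple_root:
  assumes "length y = n" "k \<in> {1..n}"
  shows "inner_l y (coroot (simple_root n k)) = (if k < n then y ! (k - 1) - y ! k else y ! (n - 1))"
  using assms inner_simple_root_self[of k n] by (simp add: inner_coroot inner_simple_root)

lemma refl_simple_root:
  assumes "length y = n" "k \<in> {1..n}"
  shows "refl (simple_root n k) y =
    (if k < n then y[k - 1 := y ! k, k := y ! (k - 1)] else y[n - 1 := - y ! (n - 1)])"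
  using assms inner_coroot_simple_root[OF assms]
  by (cases "k < n"; intro nth_equalityI) (auto simp: refl_def simple_root_def nth_list_update)

lemma length_refl [simp]: "length (refl a y) = min (length y) (length a)"
  by (simp add: refl_def)

lemma inner_l_refl_right:
  "length y = length a \<Longrightarrow> inner_l w (refl a y) = inner_l w y - inner_l y (coroot a) * inner_l w a"
  by (simp add: refl_def inner_l_vadd_right inner_l_vscale_right)

lemma weyl_orbit_invariants:
  assumes "y \<in> weyl_orbit n x" "length x = n"
  shows "length y = n \<and> mset (map abs y) = mset (map abs x)"
  using assms(1)
proof induct
  case base
  then show ?case
    using assms(2) by simp
next
  case (step y k)
  then have ly: "length y = n" and k: "k \<in> {1..n}"
    by auto
  have "mset (map abs (refl (simple_root n k) y)) = mset (map abs y)"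
  proof (cases "k < n")
    case True
    have "map abs (y[k - 1 := y ! k, k := y ! (k - 1)])
        = (map abs y)[k - 1 := map abs y ! k, k := map abs y ! (k - 1)]"
      using True ly by (simp add: map_update)
    also have "mset \<dots> = mset (map abs y)"
      using True ly by (intro mset_swap) auto
    finally show ?thesis
      using True ly k by (simp only: refl_simple_root if_True)
  next
    case False
    have "map abs (y[n - 1 := - y ! (n - 1)]) = map abs y"
      by (metis abs_minus list_update_id map_update)
    then show ?thesis
      using False ly k by (simp add: refl_simple_root)
  qed
  then show ?case
    using step ly by simp
qed

lemma finite_weyl_orbit:
  assumes "length x = n"
  shows "finite (weyl_orbit n x)"
proof (rule finite_subset)
  show "weyl_orbit n x \<subseteq> {y. set y \<subseteq> set x \<union> uminus ` set x \<and> length y = n}"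
  proof
    fix y
    assume y: "y \<in> weyl_orbit n x"
    have "v \<in> set x \<union> uminus ` set x" if "v \<in> set y" for v
    proof -
      have "\<bar>v\<bar> \<in> set (map abs x)"
        using that weyl_orbit_invariants[OF y assms] by (metis image_eqI set_map set_mset_mset)
      then obtain w where "w \<in> set x" "v = w \<or> v = - w"
        by (auto simp: abs_eq_iff)
      then show ?thesis
        by blast
    qed
    then show "y \<in> {y. set y \<subseteq> set x \<union> uminus ` set x \<and> length y = n}"
      using weyl_orbit_invariants[OF y assms] by blast
  qed
qed (simp add: finite_lists_length_eq)

text \<open>Half the sum of the positive roots of C_n.\<close>
definition rho_C :: "nat \<Rightarrow> real list" where
  "rho_C n = map (\<lambda>t. real (n - t)) [0..<n]"

lemma inner_rho_C_simple_root_pos: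
  assumes "k \<in> {1..n}"
  shows "0 < inner_l (rho_C n) (simple_root n k)"
proof -
  have "length (rho_C n) = n"
    by (simp add: rho_C_def)
  then show ?thesis
    using assms by (simp add: inner_simple_root rho_C_def of_nat_diff)
qed

text \<open>Reflecting y in a simple root alpha with (y, alpha) < 0 adds
  -(y, coroot alpha) (rho, alpha) > 0 to the pairing with rho, so a maximiser of this
  pairing on the finite orbit is dominant.\<close>
lemma exists_dominant_in_weyl_orbit:
  assumes "length x = n"
  obtains y where "y \<in> weyl_orbit n x" "dominant n y"
proof -
  let ?h = "inner_l (rho_C n)"
  have fin: "finite (weyl_orbit n x)"
    using finite_weyl_orbit[OF assms] .
  moreover have "weyl_orbit n x \<noteq> {}"
    using weyl_orbit.base by blast
  ultimately obtain y where y: "y \<in> weyl_orbit n x" and "Max (?h ` weyl_orbit n x) = ?h y"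
    by (rule obtains_MAX)
  then have max: "?h z \<le> ?h y" if "z \<in> weyl_orbit n x" for z
    using fin that by (metis Max_ge finite_imageI imageI)
  have ly: "length y = n"
    using weyl_orbit_invariants[OF y assms] by simp
  have "0 \<le> inner_l y (simple_root n k)" if k: "k \<in> {1..n}" for k
  proof (rule ccontr)
    assume "\<not> ?thesis"
    then have "inner_l y (coroot (simple_root n k)) < 0"
      using k by (simp add: inner_coroot inner_simple_root_self)
    then have "?h y < ?h (refl (simple_root n k) y)"
      using inner_rho_C_simple_root_pos[OF k] ly by (simp add: inner_l_refl_right mult_neg_pos)
    moreover have "refl (simple_root n k) y \<in> weyl_orbit n x"
      using y k by (auto intro: weyl_orbit.step)
    ultimately show False
      using max by fastforce
  qed
  then show ?thesis
    using that y unfolding dominant_def by blast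
qed

lemma dominant_sorted_nonneg:
  assumes "length y = n" "dominant n y"
  shows "sorted (rev y)" "\<forall>v\<in>set y. 0 \<le> v"
proof -
  have root: "0 \<le> inner_l y (simple_root n k)" if "k \<in> {1..n}" for k
    using assms(2) that unfolding dominant_def by blast
  have "y ! Suc t \<le> y ! t" if "Suc t < n" for t
    using root[of "Suc t"] that by (simp add: inner_simple_root assms(1))
  then show sorted: "sorted (rev y)"
    using assms(1) by (simp add: sorted_rev_iff_nth_Suc)
  show "\<forall>v\<in>set y. 0 \<le> v"
  proof
    fix v
    assume "v \<in> set y"
    then obtain t where t: "t < n" "v = y ! t"
      using assms(1) by (auto simp: in_set_conv_nth)
    have "0 \<le> y ! (n - 1)"
      using root[of n] t by (simp add: inner_simple_root assms(1))
    also have "\<dots> \<le> y ! t"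
      using sorted t assms(1) by (intro sorted_rev_nth_mono) auto
    finally show "0 \<le> v"
      using t by simp
  qed
qed

lemma dominant_in_weyl_orbit_eq:
  assumes "y \<in> weyl_orbit n x" "length x = n" "dominant n y"
  shows "y = rev (sort (map abs x))"
proof -
  have ly: "length y = n" and abs: "mset (map abs y) = mset (map abs x)"
    using weyl_orbit_invariants[OF assms(1,2)] by auto
  note dom = dominant_sorted_nonneg[OF ly assms(3)]
  have "map abs y = y"
    using dom(2) by (intro map_idI) simp
  then have "mset (rev y) = mset (map abs x)"
    using abs by simp
  then have "sort (map abs x) = rev y"
    using dom(1) by (rule properties_for_sort)
  then show ?thesis
    by simp
qed

lemma dom_rep_eq:
  assumes "length x = n"
  shows "dom_rep n x = rev (sort (map abs x))"
proof -
  obtain y where y: "y \<in> weyl_orbit n x" "dominant n y"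
    using exists_dominant_in_weyl_orbit[OF assms] .
  show ?thesis
    unfolding dom_rep_def
    using y dominant_in_weyl_orbit_eq[OF _ assms] by (intro the_equality) auto
qed

lemma eq_replicate_if_steps:
  fixes d :: "'a::zero list"
  assumes ld: "length d = n" and j: "j \<in> {1..n}"
    and steps: "\<And>k. k \<in> {1..<n} \<Longrightarrow> d ! (k - 1) = d ! k \<longleftrightarrow> k \<noteq> j"
    and last: "d ! (n - 1) = 0 \<longleftrightarrow> j \<noteq> n"
  shows "d = replicate j (d ! 0) @ replicate (n - j) 0" "d ! 0 \<noteq> 0"
proof -
  have head: "d ! t = d ! 0" if "t < j" for t
    using that
  proof (induct t)
    case (Suc t)
    then have "d ! t = d ! Suc t"
      using steps[of "Suc t"] j by simp
    then show ?case
      using Suc by simp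
  qed simp
  have tail: "d ! t = 0" if "j \<le> t" "t < n" for t
  proof -
    have "t \<le> n - 1"
      using that by simp
    then show ?thesis
    proof (induct t rule: inc_induct)
      case base
      then show ?case
        using last that by simp
    next
      case (step s)
      then have "d ! s = d ! Suc s"
        using steps[of "Suc s"] that by simp
      then show ?case
        using step by simp
    qed
  qed
  show "d = replicate j (d ! 0) @ replicate (n - j) 0"
  proof (rule nth_equalityI)
    fix t
    assume "t < length d"
    then show "d ! t = (replicate j (d ! 0) @ replicate (n - j) 0) ! t"
      using ld j head[of t] tail[of t] by (cases "t < j") (simp_all add: nth_append)
  qed (use ld j in simp)
  show "d ! 0 \<noteq> 0"
  proof (cases "j < n")
    case True
    then show ?thesis
      using steps[of j] head[of "j - 1"] tail[of j] j by simp
  next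
    case False
    then show ?thesis
      using last head[of "n - 1"] j by simp
  qed
qed

lemma basic_weight_abs_mset:
  assumes "basic_weight n i j x" "j \<in> {1..n}"
  obtains c :: real where "0 < c" "mset (map abs x) = mset (replicate j c @ replicate (n - j) 0)"
proof -
  define d where "d = rev (sort (map abs x))"
  have lx: "length x = n"
    using assms(1) by (simp add: basic_weight_def)
  have ld: "length d = n" and md: "mset d = mset (map abs x)"
    using lx by (simp_all add: d_def)
  have zero: "inner_l d (simple_root n k) = 0 \<longleftrightarrow> k \<noteq> j" if "k \<in> {1..n}" for k
  proof -
    have "{k \<in> {1..n}. inner_l d (simple_root n k) = 0} = {1..n} - {j}"
      using assms(1) dom_rep_eq[OF lx] by (simp add: basic_weight_def d_def)
    then show ?thesis
      using that by blast
  qed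
  have "d ! (k - 1) = d ! k \<longleftrightarrow> k \<noteq> j" if "k \<in> {1..<n}" for k
    using zero[of k] that by (simp add: inner_simple_root ld)
  moreover have "d ! (n - 1) = 0 \<longleftrightarrow> j \<noteq> n"
    using zero[of n] assms(2) by (auto simp: inner_simple_root ld)
  ultimately have d: "d = replicate j (d ! 0) @ replicate (n - j) 0" and "d ! 0 \<noteq> 0"
    using eq_replicate_if_steps[OF ld assms(2)] by blast+
  moreover have "0 \<le> d ! 0"
  proof -
    have "d ! 0 \<in> set d"
      using ld assms(2) by (intro nth_mem) auto
    then show ?thesis
      by (auto simp: d_def)
  qed
  ultimately show ?thesis
    using that md d by (metis order_le_neq_trans)
qed

lemma integral_weight_nth_Ints:
  assumes "integral_weight n x" "length x = n" "t < n"
  shows "x ! t \<in> \<int>"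
proof -
  let ?a = "vscale (2 * 1) (unit_e n (t + 1))"
  have "?a \<in> roots_C n"
    unfolding roots_C_def using assms(3)
    by (intro UnI2) (auto intro!: exI[of _ "t + 1"] exI[of _ "1 :: real"])
  moreover have "inner_l x (coroot ?a) = x ! t"
    using assms(2,3) inner_l_unit_e[of ?a n "t + 1"]
    by (simp add: inner_coroot inner_l_vscale_right inner_l_unit_e)
  ultimately show ?thesis
    using assms(1) unfolding integral_weight_def by metis
qed

lemma basic_weight_entries:
  assumes "basic_weight n i j x" "j \<in> {1..n}"
  obtains m :: nat
  where "0 < m" "set x \<subseteq> {- real m, 0, real m}" "length (filter (\<lambda>v. v \<noteq> 0) x) = j"
proof -
  obtain c where c: "0 < c" and M: "mset (map abs x) = mset (replicate j c @ replicate (n - j) 0)"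
    using basic_weight_abs_mset[OF assms] .
  have lx: "length x = n" and int: "integral_weight n x"
    using assms(1) by (simp_all add: basic_weight_def)
  have abs_set: "abs ` set x = set (replicate j c @ replicate (n - j) 0)"
    by (metis M set_map set_mset_mset)
  have entries: "set x \<subseteq> {- c, 0, c}"
  proof
    fix v
    assume "v \<in> set x"
    then have "\<bar>v\<bar> \<in> {c, 0}"
      using abs_set by (auto split: if_splits)
    then show "v \<in> {- c, 0, c}"
      by (auto simp: abs_if split: if_splits)
  qed
  have "length (filter (\<lambda>v. v \<noteq> 0) x) = length (filter (\<lambda>v. v \<noteq> 0) (map abs x))"
    by (simp add: filter_map comp_def)
  also have "\<dots> = length (filter (\<lambda>v. v \<noteq> 0) (replicate j c @ replicate (n - j) 0))"
    by (metis M mset_filter size_mset)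
  also have "\<dots> = j"
    using c by simp
  finally have count: "length (filter (\<lambda>v. v \<noteq> 0) x) = j" .
  have "c \<in> abs ` set x"
    using abs_set assms(2) by simp
  then obtain t where t: "t < n" "\<bar>x ! t\<bar> = c"
    using lx by (auto simp: in_set_conv_nth)
  then have "c \<in> \<nat>"
    using integral_weight_nth_Ints[OF int lx t(1)] c by (auto simp: Nats_altdef2)
  then obtain m where "c = real m"
    by (auto elim: Nats_cases)
  then show ?thesis
    using that c entries count by simp
qed

lemma three_valued_descents_listed:
  fixes x :: "real list" and c :: real
  assumes c: "0 < c" and lx: "length x = n" and n: "2 \<le> n"
    and entries: "set x \<subseteq> {- c, 0, c}" and i: "i \<in> {1..n}"
    and desc: "\<And>k. k \<in> {1..<n} - {i} \<Longrightarrow> x ! k < x ! (k - 1)"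
    and last: "i \<noteq> n \<Longrightarrow> 0 < x ! (n - 1)"
  shows "x \<in> vscale c ` listed_weights n i (length (filter (\<lambda>v. v \<noteq> 0) x))"
proof -
  have val: "x ! t \<in> {- c, 0, c}" if "t < n" for t
    using entries lx that nth_mem by blast
  have "n - 1 \<le> i"
  proof (rule ccontr)
    assume "\<not> n - 1 \<le> i"
    then have "x ! (n - 1) < x ! (n - 2)" "0 < x ! (n - 1)"
      using desc[of "n - 1"] last n by (auto simp: numeral_2_eq_2)
    then show False
      using val[of "n - 1"] val[of "n - 2"] c n by auto
  qed
  moreover have "i \<le> 3"
  proof (rule ccontr)
    assume "\<not> i \<le> 3"
    then have "x ! 3 < x ! 2" "x ! 2 < x ! 1" "x ! 1 < x ! 0"
      using desc[of 1] desc[of 2] desc[of 3] i by auto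
    then show False
      using val[of 0] val[of 1] val[of 2] val[of 3] c i \<open>\<not> i \<le> 3\<close> by auto
  qed
  ultimately consider "n = 2" | "n = 3" | "n = 4"
    using n by linarith
  then show ?thesis
  proof cases
    case 1
    then obtain a b where "x = [a, b]"
      using lx by (auto simp: numeral_eq_Suc length_Suc_conv)
    then show ?thesis
      using 1 c i entries desc[of 1] last
      by (cases "i = 1") (auto simp: listed_weights_def vscale_def)
  next
    case 2
    then obtain a b d where "x = [a, b, d]"
      using lx by (auto simp: numeral_eq_Suc length_Suc_conv)
    then show ?thesis
      using 2 c i entries desc[of 1] desc[of 2] last \<open>n - 1 \<le> i\<close>
      by (cases "i = 2") (auto simp: listed_weights_def vscale_def)
  next
    case 3
    then obtain a b d e where "x = [a, b, d, e]"
      using lx by (auto simp: numeral_eq_Suc length_Suc_conv)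
    then show ?thesis
      using 3 c i entries desc[of 1] desc[of 2] last \<open>n - 1 \<le> i\<close> \<open>i \<le> 3\<close>
      by (auto simp: listed_weights_def vscale_def)
  qed
qed

theorem theorem5p9:
  fixes n i j :: nat and x :: "real list"
  assumes "n \<ge> 2" and "i \<in> {1..n}" and "j \<in> {1..n}"
    and "basic_system n i j"
    and "basic_weight n i j x"
  shows "\<exists>m::nat. m > 0 \<and> (\<exists>y\<in>listed_weights n i j. x = vscale (real m) y)"
proof -
  have lx: "length x = n"
    using assms(5) by (simp add: basic_weight_def)
  obtain m :: nat where m: "0 < m" and entries: "set x \<subseteq> {- real m, 0, real m}"
    and count: "length (filter (\<lambda>v. v \<noteq> 0) x) = j"
    using basic_weight_entries[OF assms(5,3)] .
  have pos: "0 < inner_l x (coroot (simple_root n k))" if "k \<in> {1..n} - {i}" for k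
    using assms(5) that unfolding basic_weight_def by force
  have "x ! k < x ! (k - 1)" if "k \<in> {1..<n} - {i}" for k
    using pos[of k] that by (simp add: inner_coroot_simple_root[OF lx])
  moreover have "0 < x ! (n - 1)" if "i \<noteq> n"
    using pos[of n] that assms(1) by (simp add: inner_coroot_simple_root[OF lx])
  ultimately have "x \<in> vscale (real m) ` listed_weights n i j"
    using three_valued_descents_listed[OF _ lx assms(1) entries assms(2)] m count by simp
  then show ?thesis
    using m by blast
qed

end
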